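(* Let $\lambda\in(0,1)$, $X=[0,1]^2$, $X_1=\{(x,y)\in X:y<x^2\}$, $X_2=\{(x,y)\in X:y>x^2\}$, $f_1(x,y)=\lambda(x,y)$ and $f_2(x,y)=\lambda(x,y)+(0,1-\lambda)$. Let $f:X\to X$ be any map with $f|_{X_i}=f_i$ for $i=1,2$. Then $L=\Omega=\{(0,0),(0,1)\}$ and $\Lambda=\overline{\{(0,1-\lambda^n):n\in\mathbb N\}}$.
   Context: Here $\Delta:=X\setminus(X_1\cup X_2)$ and $\tilde X:=\bigcap_{n\ge0}f^{-n}(X\setminus\Delta)$. For $x\in\tilde X$, $\omega(x)$ is the set of limits of $f^{n_k}(x)$ along divergent sequences $(n_k)$; $L:=\overline{\bigcup_{x\in\tilde X}\omega(x)}$. A point $x\in X$ is non-wandering if for every $\epsilon>0$ there is a divergent sequence $(n_k)$ with $f^{n_k}(B(x,\epsilon)\cap\tilde X)\cap B(x,\epsilon)\ne\emptyset$ for all $k$; $\Omega$ is the set of non-wandering points. With $F_i(A):=\overline{f(A\cap X_i)}$, atoms of generation $n$ are the sets $F_{i_n}\circ\cdots\circ F_{i_1}(X)$, $\Lambda_n$ is their union, and $\Lambda:=\bigcap_{n\ge1}\Lambda_n$. *)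

theory Defs
  imports "HOL-Analysis.Analysis"
begin

type_synonym pt = "real \<times> real"

definition Xsq :: "pt set" where
  "Xsq = {0..1} \<times> {0..1}"

definition Xpiece :: "nat \<Rightarrow> pt set" where
  "Xpiece i = (if i = 1 then {(x,y) \<in> Xsq. y < x^2} else {(x,y) \<in> Xsq. y > x^2})"

definition Delta :: "pt set" where
  "Delta = Xsq - (Xpiece 1 \<union> Xpiece 2)"

text \<open>tilde X = intersection over n of f^(-n)(X - Delta), preimages taken within X.\<close>
definition tildeX :: "(pt \<Rightarrow> pt) \<Rightarrow> pt set" where
  "tildeX f = {p \<in> Xsq. \<forall>n. (f ^^ n) p \<in> Xsq - Delta}"

definition omega_lim :: "(pt \<Rightarrow> pt) \<Rightarrow> pt \<Rightarrow> pt set" where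
  "omega_lim f p = {q. \<exists>n :: nat \<Rightarrow> nat. filterlim n at_top sequentially \<and>
                        ((\<lambda>k. (f ^^ n k) p) \<longlongrightarrow> q) sequentially}"

definition Lset :: "(pt \<Rightarrow> pt) \<Rightarrow> pt set" where
  "Lset f = closure (\<Union>p \<in> tildeX f. omega_lim f p)"

definition nonwandering :: "(pt \<Rightarrow> pt) \<Rightarrow> pt \<Rightarrow> bool" where
  "nonwandering f p \<longleftrightarrow> p \<in> Xsq \<and> (\<forall>e>0. \<exists>n :: nat \<Rightarrow> nat. filterlim n at_top sequentially \<and>
      (\<forall>k. (f ^^ n k) ` (ball p e \<inter> tildeX f) \<inter> ball p e \<noteq> {}))"

definition Omega :: "(pt \<Rightarrow> pt) \<Rightarrow> pt set" where
  "Omega f = {p. nonwandering f p}"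

definition Fmap :: "(pt \<Rightarrow> pt) \<Rightarrow> nat \<Rightarrow> pt set \<Rightarrow> pt set" where
  "Fmap f i A = closure (f ` (A \<inter> Xpiece i))"

text \<open>For a word [i1,...,in], atom = F_in o ... o F_i1 (X).\<close>
definition atom :: "(pt \<Rightarrow> pt) \<Rightarrow> nat list \<Rightarrow> pt set" where
  "atom f w = foldl (\<lambda>A i. Fmap f i A) Xsq w"

definition Lambda_n :: "(pt \<Rightarrow> pt) \<Rightarrow> nat \<Rightarrow> pt set" where
  "Lambda_n f n = \<Union>{atom f w | w. length w = n \<and> set w \<subseteq> {1,2}}"

definition Lambda_set :: "(pt \<Rightarrow> pt) \<Rightarrow> pt set" where
  "Lambda_set f = (\<Inter>n\<in>{1..}. Lambda_n f n)"

end

theory Submission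
  imports Defs
begin

text \<open>Both branches multiply the first coordinate by lam, so admissible orbits approach the axis
x = 0. The region X_2 above the parabola is invariant, and there f_2 contracts everything to the
fixed point (0, 1); an orbit that never enters X_2 is the pure contraction to (0, 0). This gives
L, and Omega follows because near any other point either the first coordinate or the distance to
y = 1 shrinks uniformly along orbits. An atom of generation n lies in x \<le> lam^n, and on the axis
each F_2 acts as y \<mapsto> 1 - lam (1 - y) while F_1 only leaves y = 0, which bounds Lambda.
Conversely (0, 0) is a limit of points in the cusp x^2 < y < x^2/lam; these follow f_1 for any
prescribed number of steps, and k further applications of f_2 carry them to (0, 1 - lam^k).\<close>

lemma mem_Xsq_iff [simp]: "(x, y) \<in> Xsq \<longleftrightarrow> 0 \<le> x \<and> x \<le> 1 \<and> 0 \<le> y \<and> y \<le> 1"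
  by (auto simp: Xsq_def)

text \<open>The simplifier rewrites the index 1 to Suc 0 before this rule can match, so it is applied by
unfolding.\<close>

lemma mem_Xpiece1_iff: "(x, y) \<in> Xpiece 1 \<longleftrightarrow> (x, y) \<in> Xsq \<and> y < x\<^sup>2"
  by (auto simp: Xpiece_def)

lemma mem_Xpiece2_iff: "(x, y) \<in> Xpiece 2 \<longleftrightarrow> (x, y) \<in> Xsq \<and> x\<^sup>2 < y"
  by (auto simp: Xpiece_def)

lemma Xpiece_neq_1: "i \<noteq> 1 \<Longrightarrow> Xpiece i = Xpiece 2"
  by (simp add: Xpiece_def)

lemma Xpiece_subset_Xsq: "Xpiece i \<subseteq> Xsq"
  by (auto simp: Xpiece_def)

lemma Xsq_Diff_Delta: "Xsq - Delta = Xpiece 1 \<union> Xpiece 2"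
  using Xpiece_subset_Xsq by (auto simp: Delta_def)

lemma closed_Xsq: "closed Xsq"
  unfolding Xsq_def by (intro closed_Times) auto

lemma tildeX_subset_Xsq: "tildeX f \<subseteq> Xsq"
  by (auto simp: tildeX_def)

lemma funpow_tildeX_mem_Xpiece: "p \<in> tildeX f \<Longrightarrow> (f ^^ n) p \<in> Xpiece 1 \<union> Xpiece 2"
  unfolding tildeX_def using Xsq_Diff_Delta by auto

lemma tildeX_if_orbit_in_Xpiece:
  "p \<in> Xsq \<Longrightarrow> (\<And>n. (f ^^ n) p \<in> Xpiece 1 \<union> Xpiece 2) \<Longrightarrow> p \<in> tildeX f"
  unfolding tildeX_def using Xsq_Diff_Delta by auto

lemma omega_lim_of_tendsto:
  assumes "(\<lambda>n. (f ^^ n) p) \<longlonglongrightarrow> q"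
  shows "omega_lim f p = {q}"
proof -
  have "q' = q" if "q' \<in> omega_lim f p" for q'
  proof -
    from that obtain n :: "nat \<Rightarrow> nat" where n: "filterlim n at_top sequentially"
      and lim: "(\<lambda>k. (f ^^ n k) p) \<longlonglongrightarrow> q'"
      unfolding omega_lim_def by blast
    have "(\<lambda>k. (f ^^ n k) p) \<longlonglongrightarrow> q"
      using filterlim_compose[OF assms n] .
    then show ?thesis using LIMSEQ_unique[OF lim] by blast
  qed
  moreover have "q \<in> omega_lim f p"
    unfolding omega_lim_def using assms filterlim_ident by blast
  ultimately show ?thesis by blast
qed

lemma nonwandering_if_returning:
  assumes "p \<in> Xsq"
    and "\<And>e. e > 0 \<Longrightarrow> \<exists>q \<in> ball p e \<inter> tildeX f. \<forall>k. (f ^^ k) q \<in> ball p e"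
  shows "nonwandering f p"
  unfolding nonwandering_def
proof (intro conjI allI impI)
  fix e :: real
  assume "e > 0"
  then obtain q where "q \<in> ball p e \<inter> tildeX f" "\<forall>k. (f ^^ k) q \<in> ball p e"
    using assms(2) by blast
  then have "\<forall>k. (f ^^ k) ` (ball p e \<inter> tildeX f) \<inter> ball p e \<noteq> {}"
    by blast
  then show "\<exists>n :: nat \<Rightarrow> nat. filterlim n at_top sequentially \<and>
      (\<forall>k. (f ^^ n k) ` (ball p e \<inter> tildeX f) \<inter> ball p e \<noteq> {})"
    using filterlim_ident by blast
qed (rule assms(1))

lemma not_nonwandering:
  assumes "e > 0"
    and "\<And>n q. N \<le> n \<Longrightarrow> q \<in> ball p e \<inter> tildeX f \<Longrightarrow> (f ^^ n) q \<notin> ball p e"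
  shows "\<not> nonwandering f p"
proof
  assume "nonwandering f p"
  then obtain n :: "nat \<Rightarrow> nat" where n: "filterlim n at_top sequentially"
    and returns: "\<And>k. (f ^^ n k) ` (ball p e \<inter> tildeX f) \<inter> ball p e \<noteq> {}"
    unfolding nonwandering_def using assms(1) by blast
  obtain k where "N \<le> n k"
    using n by (auto simp: filterlim_at_top eventually_sequentially)
  then show False using returns[of k] assms(2) by blast
qed

lemma atom_Nil [simp]: "atom f [] = Xsq"
  by (simp add: atom_def)

lemma atom_snoc [simp]: "atom f (w @ [i]) = Fmap f i (atom f w)"
  by (simp add: atom_def)

lemma atom_append_replicate_Suc:
  "atom f (w @ replicate (Suc j) i) = Fmap f i (atom f (w @ replicate j i))"
  by (metis append_assoc atom_snoc replicate_Suc replicate_append_same)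

lemma Fmap_neq_1: "i \<noteq> 1 \<Longrightarrow> Fmap f i A = Fmap f 2 A"
  unfolding Fmap_def Xpiece_neq_1[of i] ..

lemma closed_atom: "closed (atom f w)"
  by (induction w rule: rev_induct) (simp_all add: closed_Xsq Fmap_def)

lemma atom_subset_Xsq:
  assumes "f ` Xsq \<subseteq> Xsq"
  shows "atom f w \<subseteq> Xsq"
proof (induction w rule: rev_induct)
  case (snoc i w)
  have "f ` (atom f w \<inter> Xpiece i) \<subseteq> f ` Xsq"
    using Xpiece_subset_Xsq by (intro image_mono) blast
  then have "f ` (atom f w \<inter> Xpiece i) \<subseteq> Xsq"
    using assms by (rule order_trans)
  then show ?case
    unfolding atom_snoc Fmap_def by (rule closure_minimal) (rule closed_Xsq)
qed simp

lemma closure_atom_Int_subset: "closure (atom f w \<inter> A) \<subseteq> atom f w"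
  by (rule closure_minimal) (auto simp: closed_atom)

lemma Lambda_n_eq_UN: "Lambda_n f n = (\<Union>w \<in> {w. length w = n \<and> set w \<subseteq> {1, 2}}. atom f w)"
  unfolding Lambda_n_def by blast

lemma closed_Lambda_set: "closed (Lambda_set f)"
proof -
  have "finite {w. length w = n \<and> set w \<subseteq> {1, 2 :: nat}}" for n
    using finite_lists_length_eq[of "{1, 2 :: nat}" n] by (simp add: conj_commute)
  then have "closed (Lambda_n f n)" for n
    unfolding Lambda_n_eq_UN by (intro closed_Union finite_imageI) (auto simp: closed_atom)
  then show ?thesis
    unfolding Lambda_set_def by (intro closed_INT) auto
qed

lemma Lambda_set_memD:
  "p \<in> Lambda_set f \<Longrightarrow> \<exists>w. length w = Suc n \<and> p \<in> atom f w"
  unfolding Lambda_set_def Lambda_n_def by auto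

lemma mem_Lambda_setI:
  "(\<And>n. \<exists>w. length w = n \<and> set w \<subseteq> {1, 2} \<and> p \<in> atom f w) \<Longrightarrow> p \<in> Lambda_set f"
  unfolding Lambda_set_def Lambda_n_def by blast

locale parabola_map =
  fixes lam :: real and f :: "pt \<Rightarrow> pt"
  assumes lam_pos: "0 < lam" and lam_less_1: "lam < 1"
    and f_Xsq: "f ` Xsq \<subseteq> Xsq"
    and f_Xpiece1: "\<forall>p \<in> Xpiece 1. f p = lam *\<^sub>R p"
    and f_Xpiece2: "\<forall>p \<in> Xpiece 2. f p = lam *\<^sub>R p + (0, 1 - lam)"
begin

lemma f_Xpiece1_eq: "(x, y) \<in> Xpiece 1 \<Longrightarrow> f (x, y) = (lam * x, lam * y)"
  using f_Xpiece1 by auto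

lemma f_Xpiece2_eq: "(x, y) \<in> Xpiece 2 \<Longrightarrow> f (x, y) = (lam * x, 1 - lam * (1 - y))"
  using f_Xpiece2 by (auto simp: algebra_simps)

lemma fst_f_Xpiece: "p \<in> Xpiece i \<Longrightarrow> fst (f p) = lam * fst p"
  using f_Xpiece1 f_Xpiece2 Xpiece_neq_1[of i] by (cases "i = 1") auto

lemma lam_power_pos: "0 < lam ^ n"
  using lam_pos by simp

lemma lam_power_le_1: "lam ^ n \<le> 1"
  using lam_pos lam_less_1 by (simp add: power_le_one)

lemma lam_power_tendsto_0: "(\<lambda>n. lam ^ n) \<longlonglongrightarrow> 0"
  using lam_pos lam_less_1 by (intro LIMSEQ_power_zero) auto

lemma f_maps_Xpiece2: "p \<in> Xpiece 2 \<Longrightarrow> f p \<in> Xpiece 2"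
proof (cases p)
  case (Pair x y)
  assume "p \<in> Xpiece 2"
  then have xy: "0 \<le> x" "x \<le> 1" "0 \<le> y" "y \<le> 1" "x\<^sup>2 < y"
    using Pair by (auto simp: mem_Xpiece2_iff)
  have "(lam * x)\<^sup>2 \<le> x\<^sup>2"
    unfolding power_mult_distrib using lam_pos lam_less_1
    by (intro mult_left_le_one_le) (auto simp: power_le_one)
  also have "\<dots> < y"
    using xy by simp
  also have "y \<le> 1 - lam * (1 - y)"
    using mult_nonneg_nonneg[of "1 - lam" "1 - y"] xy lam_less_1 by (simp add: algebra_simps)
  finally have "(lam * x)\<^sup>2 < 1 - lam * (1 - y)" .
  moreover have "lam * x \<le> 1" "lam * (1 - y) \<le> 1"
    using xy lam_pos lam_less_1 by (auto intro: mult_le_one)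
  ultimately show "f p \<in> Xpiece 2"
    using xy lam_pos Pair f_Xpiece2_eq[of x y] \<open>p \<in> Xpiece 2\<close> by (simp add: mem_Xpiece2_iff)
qed

lemma funpow_Xpiece2_mem: "p \<in> Xpiece 2 \<Longrightarrow> (f ^^ n) p \<in> Xpiece 2"
  by (induction n) (simp_all add: f_maps_Xpiece2)

lemma funpow_Xpiece2_eq:
  "(x, y) \<in> Xpiece 2 \<Longrightarrow> (f ^^ n) (x, y) = (lam ^ n * x, 1 - lam ^ n * (1 - y))"
proof (induction n)
  case (Suc n)
  then have "(lam ^ n * x, 1 - lam ^ n * (1 - y)) \<in> Xpiece 2"
    using funpow_Xpiece2_mem by metis
  then show ?case
    using Suc by (simp add: f_Xpiece2_eq algebra_simps)
qed simp

lemma Xpiece2_orbit_tendsto: "p \<in> Xpiece 2 \<Longrightarrow> (\<lambda>n. (f ^^ n) p) \<longlonglongrightarrow> (0, 1)"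
proof (cases p)
  case (Pair x y)
  assume "p \<in> Xpiece 2"
  have "(\<lambda>n. (lam ^ n * x, 1 - lam ^ n * (1 - y))) \<longlonglongrightarrow> (0 * x, 1 - 0 * (1 - y))"
    by (intro tendsto_intros lam_power_tendsto_0)
  then show ?thesis
    using Pair \<open>p \<in> Xpiece 2\<close> by (simp add: funpow_Xpiece2_eq)
qed

lemma fst_funpow_tildeX: "p \<in> tildeX f \<Longrightarrow> fst ((f ^^ n) p) = lam ^ n * fst p"
proof (induction n)
  case (Suc n)
  have "(f ^^ n) p \<in> Xpiece 1 \<union> Xpiece 2"
    using Suc.prems by (rule funpow_tildeX_mem_Xpiece)
  then obtain i where "(f ^^ n) p \<in> Xpiece i"
    by blast
  then show ?case
    using Suc fst_f_Xpiece[of "(f ^^ n) p" i] by simp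
qed simp

lemma tildeX_orbit_tendsto:
  assumes "p \<in> tildeX f"
  shows "(\<lambda>n. (f ^^ n) p) \<longlonglongrightarrow> (0, 0) \<or> (\<lambda>n. (f ^^ n) p) \<longlonglongrightarrow> (0, 1)"
proof (cases "\<exists>N. (f ^^ N) p \<in> Xpiece 2")
  case True
  then obtain N where "(f ^^ N) p \<in> Xpiece 2" by blast
  then have "(\<lambda>n. (f ^^ (n + N)) p) \<longlonglongrightarrow> (0, 1)"
    using Xpiece2_orbit_tendsto by (simp add: funpow_add)
  then show ?thesis
    by (rule disjI2[OF LIMSEQ_offset])
next
  case False
  then have X1: "(f ^^ n) p \<in> Xpiece 1" for n
    using funpow_tildeX_mem_Xpiece[OF assms] by blast
  have "(f ^^ n) p = lam ^ n *\<^sub>R p" for n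
  proof (induction n)
    case (Suc n)
    then show ?case
      using f_Xpiece1 X1[of n] by simp
  qed simp
  moreover have "(\<lambda>n. lam ^ n *\<^sub>R p) \<longlonglongrightarrow> 0 *\<^sub>R p"
    by (intro tendsto_intros lam_power_tendsto_0)
  ultimately show ?thesis
    by (simp add: zero_prod_def)
qed

lemma axis_orbit_mem_Xpiece1:
  assumes "0 < d" "d \<le> 1"
  shows "(lam ^ n * d, 0) \<in> Xpiece 1"
proof -
  have "lam ^ n * d \<le> 1"
    using assms lam_power_le_1 by (simp add: mult_le_one)
  then show ?thesis
    using assms lam_pos by (simp add: Xpiece_def)
qed

lemma axis_orbit:
  assumes "0 < d" "d \<le> 1"
  shows "(f ^^ n) (d, 0) = (lam ^ n * d, 0)"
proof (induction n)
  case (Suc n)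
  then show ?case
    using f_Xpiece1_eq[OF axis_orbit_mem_Xpiece1[OF assms, of n]] by simp
qed simp

lemma axis_point_in_tildeX:
  assumes "0 < d" "d \<le> 1"
  shows "(d, 0) \<in> tildeX f"
  using assms axis_orbit_mem_Xpiece1[OF assms]
  by (intro tildeX_if_orbit_in_Xpiece) (simp_all add: axis_orbit)

lemma top_point_in_Xpiece2: "(0, 1) \<in> Xpiece 2"
  by (simp add: mem_Xpiece2_iff)

lemma funpow_top_point: "(f ^^ n) (0, 1) = (0, 1)"
  using funpow_Xpiece2_eq[OF top_point_in_Xpiece2] by simp

lemma top_point_in_tildeX: "(0, 1) \<in> tildeX f"
  by (rule tildeX_if_orbit_in_Xpiece) (simp_all add: funpow_top_point top_point_in_Xpiece2)

lemma Lset_eq: "Lset f = {(0, 0), (0, 1)}"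
proof -
  have "omega_lim f p \<subseteq> {(0, 0), (0, 1)}" if "p \<in> tildeX f" for p
    using tildeX_orbit_tendsto[OF that] by (elim disjE) (simp_all add: omega_lim_of_tendsto)
  then have "(\<Union>p \<in> tildeX f. omega_lim f p) \<subseteq> {(0, 0), (0, 1)}"
    by (rule UN_least)
  moreover have "omega_lim f (1, 0) = {(0, 0)}"
  proof (rule omega_lim_of_tendsto)
    have "(\<lambda>n. (lam ^ n * 1, 0 :: real)) \<longlonglongrightarrow> (0 * 1, 0)"
      by (intro tendsto_intros lam_power_tendsto_0)
    then show "(\<lambda>n. (f ^^ n) (1, 0)) \<longlonglongrightarrow> (0, 0)"
      by (simp add: axis_orbit)
  qed
  then have "(0, 0) \<in> (\<Union>p \<in> tildeX f. omega_lim f p)"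
    using axis_point_in_tildeX[of 1] by (intro UN_I[of "(1, 0)"]) simp_all
  moreover have "omega_lim f (0, 1) = {(0, 1)}"
    by (rule omega_lim_of_tendsto) (simp add: funpow_top_point)
  then have "(0, 1) \<in> (\<Union>p \<in> tildeX f. omega_lim f p)"
    using top_point_in_tildeX by (intro UN_I[of "(0, 1)"]) simp_all
  ultimately have "(\<Union>p \<in> tildeX f. omega_lim f p) = {(0, 0), (0, 1)}"
    by (intro equalityI) simp_all
  then show ?thesis
    unfolding Lset_def by (simp add: closure_insert)
qed

lemma origin_nonwandering: "nonwandering f (0, 0)"
proof (rule nonwandering_if_returning)
  fix e :: real
  assume "e > 0"
  define d where "d = min (e / 2) 1"
  have d: "0 < d" "d \<le> 1" "d < e"
    using \<open>e > 0\<close> by (auto simp: d_def)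
  have "(f ^^ k) (d, 0) \<in> ball (0, 0) e" for k
  proof -
    have "lam ^ k * d \<le> d"
      using d lam_power_le_1 lam_power_pos[of k] by (intro mult_left_le_one_le) auto
    then have "lam ^ k * d < e"
      using d by linarith
    moreover have "0 < lam ^ k * d"
      using d lam_power_pos[of k] by simp
    ultimately show ?thesis
      by (simp add: axis_orbit[OF d(1,2)] dist_Pair_Pair)
  qed
  moreover from this[of 0] have "(d, 0) \<in> ball (0, 0 :: real) e"
    by simp
  ultimately show "\<exists>q \<in> ball (0, 0) e \<inter> tildeX f. \<forall>k. (f ^^ k) q \<in> ball (0, 0) e"
    using axis_point_in_tildeX[OF d(1,2)] by (intro bexI[of _ "(d, 0)"]) simp_all
qed simp

lemma top_point_nonwandering: "nonwandering f (0, 1)"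
proof (rule nonwandering_if_returning)
  fix e :: real
  assume "e > 0"
  then show "\<exists>q \<in> ball (0, 1) e \<inter> tildeX f. \<forall>k. (f ^^ k) q \<in> ball (0, 1) e"
    using top_point_in_tildeX by (intro bexI[of _ "(0, 1)"]) (simp_all add: funpow_top_point)
qed simp

lemma off_axis_wandering:
  assumes "0 < fst p"
  shows "\<not> nonwandering f p"
proof -
  define e where "e = fst p / 2"
  obtain N where N: "lam ^ N < 1 / 3"
    using real_arch_pow_inv[of "1 / 3" lam] lam_less_1 by auto
  have "(f ^^ n) q \<notin> ball p e" if "N \<le> n" and q: "q \<in> ball p e \<inter> tildeX f" for n q
  proof
    assume "(f ^^ n) q \<in> ball p e"
    then have "fst p / 2 < fst ((f ^^ n) q)"
      using dist_fst_le[of p "(f ^^ n) q"] by (auto simp: e_def dist_real_def)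
    moreover have "fst q < 3 / 2 * fst p"
      using q dist_fst_le[of p q] by (auto simp: e_def dist_real_def)
    moreover have "fst ((f ^^ n) q) \<le> 1 / 3 * fst q"
    proof -
      have "0 \<le> fst q"
        using q tildeX_subset_Xsq[of f] by (auto simp: Xsq_def mem_Times_iff)
      moreover have "lam ^ n \<le> lam ^ N"
        using \<open>N \<le> n\<close> lam_pos lam_less_1 by (simp add: power_decreasing)
      then have "lam ^ n < 1 / 3"
        using N by linarith
      ultimately have "lam ^ n * fst q \<le> 1 / 3 * fst q"
        by (intro mult_right_mono) auto
      then show ?thesis
        using q fst_funpow_tildeX[of q n] by simp
    qed
    ultimately show False
      by linarith
  qed
  moreover have "e > 0"
    using assms by (simp add: e_def)
  ultimately show ?thesis
    using not_nonwandering by blast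
qed

lemma axis_wandering:
  assumes "0 < b" "b < 1"
  shows "\<not> nonwandering f (0, b)"
proof -
  define e where "e = min (b / 2) ((1 - b) / 2)"
  have e: "0 < e" "e \<le> b / 2" "e \<le> (1 - b) / 2"
    using assms by (auto simp: e_def min_def)
  obtain N where N: "lam ^ N < (1 - b) / 2"
    using real_arch_pow_inv[of "(1 - b) / 2" lam] lam_less_1 assms by auto
  have "(f ^^ n) q \<notin> ball (0, b) e" if "N \<le> n" and q: "q \<in> ball (0, b) e \<inter> tildeX f" for n q
  proof (cases q)
    case (Pair x y)
    have xy: "0 \<le> x" "x \<le> 1" "0 \<le> y" "y \<le> 1"
      using q Pair tildeX_subset_Xsq[of f] by auto
    have "x < e" "b - e < y"
      using q Pair dist_fst_le[of "(0, b)" q] dist_snd_le[of "(0, b)" q]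
      by (auto simp: dist_real_def)
    moreover have "x\<^sup>2 \<le> x"
      using xy by (simp add: power2_eq_square mult_left_le_one_le)
    ultimately have "(x, y) \<in> Xpiece 2"
      using xy e by (simp add: mem_Xpiece2_iff)
    then have "snd ((f ^^ n) q) = 1 - lam ^ n * (1 - y)"
      using Pair by (simp add: funpow_Xpiece2_eq)
    moreover have "lam ^ n * (1 - y) \<le> lam ^ N"
    proof -
      have "lam ^ n * (1 - y) \<le> lam ^ n"
        using xy lam_power_pos[of n] by (simp add: mult_left_le)
      also have "\<dots> \<le> lam ^ N"
        using \<open>N \<le> n\<close> lam_pos lam_less_1 by (simp add: power_decreasing)
      finally show ?thesis .
    qed
    ultimately have "1 - lam ^ N \<le> snd ((f ^^ n) q)"
      by linarith
    then have "b + e < snd ((f ^^ n) q)"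
      using N e by argo
    then show ?thesis
      using dist_snd_le[of "(0, b)" "(f ^^ n) q"] by (auto simp: dist_real_def)
  qed
  then show ?thesis
    using not_nonwandering e(1) by blast
qed

lemma Omega_eq: "Omega f = {(0, 0), (0, 1)}"
proof
  show "{(0, 0), (0, 1)} \<subseteq> Omega f"
    using origin_nonwandering top_point_nonwandering by (simp add: Omega_def)
  show "Omega f \<subseteq> {(0, 0), (0, 1)}"
  proof
    fix p
    assume "p \<in> Omega f"
    then have nw: "nonwandering f p"
      by (simp add: Omega_def)
    obtain a b where p: "p = (a, b)"
      by (cases p)
    have "0 \<le> a" "0 \<le> b" "b \<le> 1"
      using nw p by (auto simp: nonwandering_def)
    moreover have "\<not> 0 < a"
      using off_axis_wandering nw p by auto
    moreover have "\<not> (0 < b \<and> b < 1)" if "a = 0"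
      using axis_wandering nw p that by auto
    ultimately show "p \<in> {(0, 0), (0, 1)}"
      using p by force
  qed
qed

lemma atom_fst_le: "atom f w \<subseteq> {p. fst p \<le> lam ^ length w}"
proof (induction w rule: rev_induct)
  case (snoc i w)
  have "f ` (atom f w \<inter> Xpiece i) \<subseteq> {p. fst p \<le> lam ^ length (w @ [i])}"
  proof
    fix z
    assume "z \<in> f ` (atom f w \<inter> Xpiece i)"
    then obtain r where "r \<in> atom f w" "r \<in> Xpiece i" "z = f r"
      by blast
    then show "z \<in> {p. fst p \<le> lam ^ length (w @ [i])}"
      using snoc.IH lam_pos by (auto simp: fst_f_Xpiece)
  qed
  moreover have "closed {p :: pt. fst p \<le> lam ^ length (w @ [i])}"
    by (intro closed_Collect_le continuous_intros)
  ultimately show ?case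
    unfolding atom_snoc Fmap_def by (rule closure_minimal)
qed (auto simp: Xsq_def)

definition axis_slice_bound :: "nat \<Rightarrow> real set" where
  "axis_slice_bound n = {1 - lam ^ k | k. k < n} \<union> {1 - lam ^ n..1}"

lemma zero_in_axis_slice_bound_Suc: "0 \<in> axis_slice_bound (Suc n)"
  unfolding axis_slice_bound_def by force

lemma axis_slice_bound_Suc:
  assumes "y \<in> axis_slice_bound n"
  shows "1 - lam * (1 - y) \<in> axis_slice_bound (Suc n)"
  using assms unfolding axis_slice_bound_def
proof (elim UnE)
  assume "y \<in> {1 - lam ^ k | k. k < n}"
  then obtain k where "k < n" "y = 1 - lam ^ k"
    by blast
  then have "1 - lam * (1 - y) = 1 - lam ^ Suc k" "Suc k < Suc n"
    by simp_all
  then show "1 - lam * (1 - y) \<in> {1 - lam ^ k | k. k < Suc n} \<union> {1 - lam ^ Suc n..1}"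
    by blast
next
  assume "y \<in> {1 - lam ^ n..1}"
  then have "lam * (1 - y) \<le> lam * lam ^ n" "0 \<le> lam * (1 - y)"
    using lam_pos by (auto intro: mult_left_mono)
  then show "1 - lam * (1 - y) \<in> {1 - lam ^ k | k. k < Suc n} \<union> {1 - lam ^ Suc n..1}"
    by simp
qed

lemma Fmap1_subset: "Fmap f 1 A \<subseteq> {p. lam * snd p \<le> (fst p)\<^sup>2}"
  unfolding Fmap_def
proof (rule closure_minimal)
  show "f ` (A \<inter> Xpiece 1) \<subseteq> {p. lam * snd p \<le> (fst p)\<^sup>2}"
  proof
    fix z
    assume "z \<in> f ` (A \<inter> Xpiece 1)"
    then obtain x y where xy: "(x, y) \<in> Xpiece 1" and z: "z = f (x, y)"
      by auto
    have "y < x\<^sup>2"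
      using xy unfolding mem_Xpiece1_iff by simp
    then have "lam\<^sup>2 * y \<le> lam\<^sup>2 * x\<^sup>2"
      by (intro mult_left_mono) auto
    then show "z \<in> {p. lam * snd p \<le> (fst p)\<^sup>2}"
      using z f_Xpiece1_eq[OF xy] by (simp add: power2_eq_square algebra_simps)
  qed
qed (intro closed_Collect_le continuous_intros)

text \<open>The map on the right is the inverse of f_2.\<close>

lemma Fmap2_subset:
  assumes "closed A"
  shows "Fmap f 2 A \<subseteq> (\<lambda>(x, y). (x / lam, (y - (1 - lam)) / lam)) -` A"
  unfolding Fmap_def
proof (rule closure_minimal)
  show "f ` (A \<inter> Xpiece 2) \<subseteq> (\<lambda>(x, y). (x / lam, (y - (1 - lam)) / lam)) -` A"
  proof
    fix z
    assume "z \<in> f ` (A \<inter> Xpiece 2)"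
    then obtain x y where "(x, y) \<in> A" "(x, y) \<in> Xpiece 2" "z = f (x, y)"
      by auto
    moreover have "(1 - lam * (1 - y) - (1 - lam)) / lam = y"
      using lam_pos by (simp add: algebra_simps)
    ultimately show "z \<in> (\<lambda>(x, y). (x / lam, (y - (1 - lam)) / lam)) -` A"
      using lam_pos by (simp add: f_Xpiece2_eq)
  qed
  show "closed ((\<lambda>(x, y). (x / lam, (y - (1 - lam)) / lam)) -` A)"
    unfolding case_prod_beta
    by (intro closed_vimage assms continuous_intros) (use lam_pos in auto)
qed

lemma axis_slice_atom: "(0, y) \<in> atom f w \<Longrightarrow> y \<in> axis_slice_bound (length w)"
proof (induction w arbitrary: y rule: rev_induct)
  case Nil
  then show ?case
    by (simp add: axis_slice_bound_def)
next
  case (snoc i w)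
  show ?case
  proof (cases "i = 1")
    case True
    then have "lam * y \<le> 0"
      using snoc.prems Fmap1_subset[of "atom f w"] by auto
    moreover have "0 \<le> y"
      using subsetD[OF atom_subset_Xsq[OF f_Xsq] snoc.prems] by simp
    ultimately have "y = 0"
      using lam_pos by (simp add: mult_le_0_iff)
    then show ?thesis
      by (simp add: zero_in_axis_slice_bound_Suc)
  next
    case False
    then have "(0, y) \<in> Fmap f 2 (atom f w)"
      using snoc.prems by (simp add: Fmap_neq_1[OF False])
    then have "(0, (y - (1 - lam)) / lam) \<in> atom f w"
      using Fmap2_subset[OF closed_atom[of f w]] by auto
    then have "1 - lam * (1 - (y - (1 - lam)) / lam) \<in> axis_slice_bound (Suc (length w))"
      by (intro axis_slice_bound_Suc snoc.IH)
    moreover have "lam * ((y - (1 - lam)) / lam) = y - (1 - lam)"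
      using lam_pos by simp
    ultimately show ?thesis
      by (simp add: right_diff_distrib)
  qed
qed

lemma top_point_in_closure: "(0, 1) \<in> closure {(0 :: real, 1 - lam ^ n) | n :: nat. True}"
  unfolding closure_sequential
proof (intro exI conjI)
  show "\<forall>n. (0, 1 - lam ^ n) \<in> {(0 :: real, 1 - lam ^ n) | n :: nat. True}"
    by blast
  have "(\<lambda>n. (0 :: real, 1 - lam ^ n)) \<longlonglongrightarrow> (0, 1 - 0)"
    by (intro tendsto_intros lam_power_tendsto_0)
  then show "(\<lambda>n. (0 :: real, 1 - lam ^ n)) \<longlonglongrightarrow> (0, 1)"
    by simp
qed

lemma mem_all_axis_slice_bounds:
  assumes "\<And>n. y \<in> axis_slice_bound (Suc n)" and "y < 1"
  shows "\<exists>k. y = 1 - lam ^ k"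
proof -
  obtain N where "lam ^ N < 1 - y"
    using real_arch_pow_inv[of "1 - y" lam] assms(2) lam_less_1 by auto
  moreover have "lam ^ Suc N \<le> lam ^ N"
    using lam_pos lam_less_1 by (simp add: power_decreasing)
  ultimately have "y \<notin> {1 - lam ^ Suc N..1}"
    by auto
  then show ?thesis
    using assms(1)[of N] unfolding axis_slice_bound_def by blast
qed

lemma Lambda_set_subset: "Lambda_set f \<subseteq> closure {(0 :: real, 1 - lam ^ n) | n :: nat. True}"
proof
  fix p
  assume "p \<in> Lambda_set f"
  then have atoms: "\<exists>w. length w = Suc n \<and> p \<in> atom f w" for n
    by (rule Lambda_set_memD)
  obtain x y where p: "p = (x, y)"
    by (cases p)
  have "p \<in> Xsq"
    using atoms[of 0] atom_subset_Xsq[OF f_Xsq] by blast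
  then have x: "0 \<le> x" and y: "y \<le> 1"
    using p by auto
  have "x \<le> lam ^ Suc n" for n
    using atoms[of n] atom_fst_le p by fastforce
  then have "x \<le> 0"
    by (intro LIMSEQ_le_const[OF LIMSEQ_Suc[OF lam_power_tendsto_0]]) auto
  with x have "x = 0"
    by simp
  have "y \<in> axis_slice_bound (Suc n)" for n
    using atoms[of n] axis_slice_atom p \<open>x = 0\<close> by fastforce
  then show "p \<in> closure {(0 :: real, 1 - lam ^ n) | n :: nat. True}"
    using mem_all_axis_slice_bounds[of y] y top_point_in_closure p \<open>x = 0\<close>
    by (cases "y = 1") (auto intro: subsetD[OF closure_subset])
qed

lemma cusp_subset_atom:
  "{(x, y). 0 < x \<and> x \<le> lam ^ Suc m \<and> 0 \<le> y \<and> lam * y < x\<^sup>2} \<subseteq> atom f (replicate m 1)"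
proof (induction m)
  case 0
  have "y \<le> 1" if "x \<le> lam" "0 < x" "lam * y < x\<^sup>2" for x y :: real
  proof -
    have "x\<^sup>2 \<le> lam * lam"
      using that by (simp add: power2_eq_square mult_mono)
    then have "lam * y < lam * lam"
      using that by linarith
    then have "y < lam"
      using lam_pos by simp
    then show ?thesis
      using lam_less_1 by simp
  qed
  then show ?case
    using lam_less_1 by auto
next
  case (Suc m)
  show ?case
  proof clarify
    fix x y :: real
    assume xy: "0 < x" "x \<le> lam ^ Suc (Suc m)" "0 \<le> y" "lam * y < x\<^sup>2"
    define r where "r = (x / lam, y / lam)"
    have "lam * (y / lam) < (x / lam)\<^sup>2"
    proof -
      have "y < x\<^sup>2 / lam"
        using xy lam_pos by (simp add: field_simps)
      also have "\<dots> \<le> x\<^sup>2 / lam / lam"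
        using lam_pos lam_less_1 by (simp add: le_divide_eq mult_right_le_one_le)
      finally show ?thesis
        using lam_pos by (simp add: field_simps power2_eq_square)
    qed
    moreover have "x / lam \<le> lam ^ Suc m"
      using xy lam_pos by (simp add: field_simps)
    ultimately have "r \<in> atom f (replicate m 1)"
      using Suc.IH xy lam_pos by (auto simp: r_def)
    moreover have "y / lam < (x / lam)\<^sup>2"
      using xy lam_pos by (simp add: field_simps power2_eq_square)
    moreover have "r \<in> Xsq"
      using calculation(1) atom_subset_Xsq[OF f_Xsq] by blast
    ultimately have "r \<in> atom f (replicate m 1) \<inter> Xpiece 1"
      unfolding r_def Int_iff mem_Xpiece1_iff by simp
    moreover have "f r = (x, y)"
      using lam_pos f_Xpiece1 calculation by (auto simp: r_def)
    ultimately have "(x, y) \<in> f ` (atom f (replicate m 1) \<inter> Xpiece 1)"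
      by (metis image_eqI)
    then have "(x, y) \<in> Fmap f 1 (atom f (replicate m 1))"
      unfolding Fmap_def by (rule subsetD[OF closure_subset])
    then show "(x, y) \<in> atom f (replicate (Suc m) 1)"
      using atom_append_replicate_Suc[of f "[]" m 1] by simp
  qed
qed

lemma origin_in_closure_atom_Xpiece2: "(0, 0) \<in> closure (atom f (replicate m 1) \<inter> Xpiece 2)"
proof -
  txt \<open>Any c between 1 and 1/lam puts the points (u, c u^2) into the cusp and above the parabola.\<close>
  define c where "c = (1 + lam) / (2 * lam)"
  have c: "1 < c" "lam * c < 1"
    using lam_pos lam_less_1 by (simp_all add: c_def field_simps)
  define u where "u t = lam ^ Suc m * lam ^ t" for t
  have u: "0 < u t" "u t \<le> lam ^ Suc m" for t
    using lam_pos lam_power_le_1[of t] by (simp_all add: u_def mult_left_le)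
  have "(u t, c * (u t)\<^sup>2) \<in> atom f (replicate m 1) \<inter> Xpiece 2" for t
  proof -
    have "lam * (c * (u t)\<^sup>2) < (u t)\<^sup>2"
      using c u[of t] by (simp add: mult.assoc[symmetric])
    then have in_atom: "(u t, c * (u t)\<^sup>2) \<in> atom f (replicate m 1)"
      using c u[of t] cusp_subset_atom[of m] by auto
    then have "(u t, c * (u t)\<^sup>2) \<in> Xsq"
      using atom_subset_Xsq[OF f_Xsq] by blast
    moreover have "(u t)\<^sup>2 < c * (u t)\<^sup>2"
      using c u[of t] by simp
    ultimately show ?thesis
      using in_atom by (simp add: mem_Xpiece2_iff)
  qed
  moreover have "(\<lambda>t. (u t, c * (u t)\<^sup>2)) \<longlonglongrightarrow> (lam ^ Suc m * 0, c * (lam ^ Suc m * 0)\<^sup>2)"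
    unfolding u_def by (intro tendsto_intros lam_power_tendsto_0)
  ultimately show ?thesis
    unfolding closure_sequential by (intro exI[of _ "\<lambda>t. (u t, c * (u t)\<^sup>2)"]) simp
qed

lemma closure_Fmap2_Xpiece2:
  assumes "p \<in> closure (A \<inter> Xpiece 2)"
  shows "lam *\<^sub>R p + (0, 1 - lam) \<in> closure (Fmap f 2 A \<inter> Xpiece 2)"
proof -
  let ?g = "\<lambda>p :: pt. lam *\<^sub>R p + (0, 1 - lam)"
  have "?g ` (A \<inter> Xpiece 2) \<subseteq> Fmap f 2 A \<inter> Xpiece 2"
  proof
    fix z
    assume "z \<in> ?g ` (A \<inter> Xpiece 2)"
    then obtain r where r: "r \<in> A \<inter> Xpiece 2" "z = f r"
      using f_Xpiece2 by auto
    then have "z \<in> Fmap f 2 A"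
      unfolding Fmap_def by (blast intro: subsetD[OF closure_subset])
    moreover have "z \<in> Xpiece 2"
      using r f_maps_Xpiece2 by blast
    ultimately show "z \<in> Fmap f 2 A \<inter> Xpiece 2"
      by blast
  qed
  then have "?g ` (A \<inter> Xpiece 2) \<subseteq> closure (Fmap f 2 A \<inter> Xpiece 2)"
    using closure_subset by blast
  moreover have "continuous_on (closure (A \<inter> Xpiece 2)) ?g"
    by (intro continuous_intros)
  ultimately have "?g ` closure (A \<inter> Xpiece 2) \<subseteq> closure (Fmap f 2 A \<inter> Xpiece 2)"
    using image_closure_subset closed_closure by blast
  then show ?thesis
    using assms by blast
qed

lemma axis_point_in_closure_atom_iterate:
  assumes "(0, y) \<in> closure (atom f w \<inter> Xpiece 2)"
  shows "(0, 1 - lam ^ j * (1 - y)) \<in> closure (atom f (w @ replicate j 2) \<inter> Xpiece 2)"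
proof (induction j)
  case 0
  then show ?case
    using assms by simp
next
  case (Suc j)
  have "(0, 1 - lam ^ Suc j * (1 - y)) = lam *\<^sub>R (0, 1 - lam ^ j * (1 - y)) + (0, 1 - lam)"
    by (simp add: algebra_simps)
  then show ?case
    unfolding atom_append_replicate_Suc using closure_Fmap2_Xpiece2[OF Suc.IH] by metis
qed

lemma axis_point_in_atom: "\<exists>w. length w = n \<and> set w \<subseteq> {1, 2} \<and> (0, 1 - lam ^ k) \<in> atom f w"
proof (cases "k \<le> n")
  case True
  define w :: "nat list" where "w = replicate (n - k) 1 @ replicate k 2"
  have "(0, 1 - lam ^ k * (1 - 0)) \<in> closure (atom f w \<inter> Xpiece 2)"
    unfolding w_def by (intro axis_point_in_closure_atom_iterate origin_in_closure_atom_Xpiece2)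
  then have "(0, 1 - lam ^ k) \<in> atom f w"
    using closure_atom_Int_subset by auto
  then show ?thesis
    using True by (intro exI[of _ w]) (auto simp: w_def)
next
  case False
  have "lam ^ (k - n) < 1"
    using False lam_pos lam_less_1 by (simp add: power_less_one_iff)
  then have "(0, 1 - lam ^ (k - n)) \<in> atom f [] \<inter> Xpiece 2"
    using lam_power_pos[of "k - n"] by (simp add: mem_Xpiece2_iff)
  then have "(0, 1 - lam ^ n * (1 - (1 - lam ^ (k - n)))) \<in> closure (atom f ([] @ replicate n 2) \<inter> Xpiece 2)"
    by (intro axis_point_in_closure_atom_iterate subsetD[OF closure_subset])
  moreover have "lam ^ n * lam ^ (k - n) = lam ^ k"
    using False by (simp flip: power_add)
  ultimately have "(0, 1 - lam ^ k) \<in> atom f (replicate n 2)"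
    using closure_atom_Int_subset by auto
  then show ?thesis
    by (intro exI[of _ "replicate n 2"]) auto
qed

lemma Lambda_set_eq: "Lambda_set f = closure {(0 :: real, 1 - lam ^ n) | n :: nat. True}"
proof
  show "Lambda_set f \<subseteq> closure {(0, 1 - lam ^ n) | n :: nat. True}"
    by (rule Lambda_set_subset)
  have "{(0, 1 - lam ^ n) | n :: nat. True} \<subseteq> Lambda_set f"
    using axis_point_in_atom by (auto intro: mem_Lambda_setI)
  then show "closure {(0, 1 - lam ^ n) | n :: nat. True} \<subseteq> Lambda_set f"
    using closed_Lambda_set by (rule closure_minimal)
qed

end

theorem proposition3:
  fixes lam :: real and f :: "pt \<Rightarrow> pt"
  assumes "0 < lam" and "lam < 1"
    and "f ` Xsq \<subseteq> Xsq"
    and "\<forall>p \<in> Xpiece 1. f p = lam *\<^sub>R p"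
    and "\<forall>p \<in> Xpiece 2. f p = lam *\<^sub>R p + (0, 1 - lam)"
  shows "Lset f = {(0,0), (0,1)} \<and> Omega f = {(0,0), (0,1)} \<and>
         Lambda_set f = closure {(0, 1 - lam ^ n) | n :: nat. True}"
proof -
  interpret parabola_map lam f
    using assms by unfold_locales
  show ?thesis
    using Lset_eq Omega_eq Lambda_set_eq by blast
qed

end
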